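(* Let $a\ge1$, let $f\colon[a,+\infty)\to\mathbb R$ be continuous with $|f(t)|\le c/t^2$ for all $t\ge a$, where $c>0$ is a real constant. Let $y_1,y_2\colon[a,+\infty)\to\mathbb R$ be $\mathbb R$-linearly independent $\mathcal C^2$ solutions of $y''+fy=0$, and put $y=y_1+y_2i$ and $z=y'/y$ (note $y(t)\ne0$ for all $t\ge a$). Then there is a real $D>0$ with $|z(t)|\le Dt^{2c}$ for all $t\ge a$.
   Context: Differentiability at the endpoint $a$ is understood one-sidedly. *)

theory Defs
  imports "HOL-Analysis.Analysis"
begin

end

theory Submission
  imports Defs
begin

text \<open>The Wronskian \<open>W = y\<^sub>1 y\<^sub>2' - y\<^sub>1' y\<^sub>2\<close> is a nonzero constant, and Lagrange's identity
  \<open>|y|\<^sup>2 |y'|\<^sup>2 = W\<^sup>2 + (y\<^sub>1 y\<^sub>1' + y\<^sub>2 y\<^sub>2')\<^sup>2\<close> gives \<open>|z| = |y'| / |y| \<le> |y'|\<^sup>2 / |W|\<close>.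
  The energy \<open>E = |y'|\<^sup>2 + c |y|\<^sup>2 / t\<^sup>2\<close> satisfies \<open>E' \<le> (2c / t) E\<close>, because
  \<open>|f| \<le> c / t\<^sup>2\<close> and \<open>2 |y y'| \<le> |y|\<^sup>2 / t + t |y'|\<^sup>2\<close>; hence \<open>E\<close> grows at most like \<open>t\<^sup>2\<^sup>c\<close>.\<close>

definition solves_linear_ode ::
    "real \<Rightarrow> (real \<Rightarrow> real) \<Rightarrow> (real \<Rightarrow> real) \<Rightarrow> (real \<Rightarrow> real) \<Rightarrow> bool" where
  "solves_linear_ode a f y y' \<longleftrightarrow>
     (\<forall>t\<ge>a. (y has_real_derivative y' t) (at t within {a..}) \<and>
             (y' has_real_derivative - f t * y t) (at t within {a..}))"

lemma solves_linear_odeD: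
  assumes "solves_linear_ode a f y y'" "a \<le> t"
  shows "(y has_real_derivative y' t) (at t within {a..})"
    and "(y' has_real_derivative - f t * y t) (at t within {a..})"
  using assms by (auto simp: solves_linear_ode_def)

lemma solves_linear_ode_lincomb:
  assumes "solves_linear_ode a f y1 y1'" "solves_linear_ode a f y2 y2'"
  shows "solves_linear_ode a f (\<lambda>t. \<alpha> * y1 t + \<beta> * y2 t) (\<lambda>t. \<alpha> * y1' t + \<beta> * y2' t)"
  unfolding solves_linear_ode_def
proof (intro allI impI conjI)
  fix t assume "a \<le> t"
  note d = solves_linear_odeD[OF assms(1) this] solves_linear_odeD[OF assms(2) this]
  show "((\<lambda>t. \<alpha> * y1 t + \<beta> * y2 t) has_real_derivative \<alpha> * y1' t + \<beta> * y2' t) (at t within {a..})"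
    by (rule derivative_eq_intros d refl)+ simp
  show "((\<lambda>t. \<alpha> * y1' t + \<beta> * y2' t) has_real_derivative
          - f t * (\<alpha> * y1 t + \<beta> * y2 t)) (at t within {a..})"
    by (rule derivative_eq_intros d refl)+ (simp add: algebra_simps)
qed

lemma DERIV_nonpos_imp_decreasing_atLeast:
  fixes \<phi> \<phi>' :: "real \<Rightarrow> real"
  assumes deriv: "\<And>t. a \<le> t \<Longrightarrow> (\<phi> has_real_derivative \<phi>' t) (at t within {a..})"
    and nonpos: "\<And>t. a \<le> t \<Longrightarrow> \<phi>' t \<le> 0"
    and "a \<le> s" "s \<le> t"
  shows "\<phi> t \<le> \<phi> s"
proof (rule DERIV_nonpos_imp_decreasing_open[OF \<open>s \<le> t\<close>])
  fix x assume "s < x" "x < t"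
  with \<open>a \<le> s\<close> have "(\<phi> has_real_derivative \<phi>' x) (at x within {a<..})"
    by (intro has_field_derivative_subset[OF deriv]) auto
  moreover have "at x within {a<..} = at x"
    using \<open>a \<le> s\<close> \<open>s < x\<close> by (intro at_within_open) auto
  ultimately show "\<exists>y. (\<phi> has_real_derivative y) (at x) \<and> y \<le> 0"
    using nonpos[of x] \<open>a \<le> s\<close> \<open>s < x\<close> by auto
next
  have "continuous_on {a..} \<phi>"
    by (auto simp: continuous_on_eq_continuous_within intro: DERIV_continuous deriv)
  then show "continuous_on {s..t} \<phi>"
    by (rule continuous_on_subset) (use \<open>a \<le> s\<close> in auto)
qed

text \<open>Uniqueness for the initial value problem: \<open>exp (- L t) (y\<^sup>2 + y'\<^sup>2)\<close> is
  non-increasing once \<open>L \<ge> 1 + sup \<bar>f\<bar>\<close>.\<close>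
lemma solves_linear_ode_eq_0:
  assumes sol: "solves_linear_ode a f y y'"
    and f_bound: "\<And>t. a \<le> t \<Longrightarrow> \<bar>f t\<bar> \<le> K"
    and "y a = 0" "y' a = 0" "a \<le> t"
  shows "y t = 0"
proof -
  define L where "L = 1 + \<bar>K\<bar>"
  define \<phi> where "\<phi> t = exp (- L * t) * ((y t)\<^sup>2 + (y' t)\<^sup>2)" for t
  define \<phi>' where "\<phi>' t = exp (- L * t) * (2 * y t * y' t * (1 - f t) - L * ((y t)\<^sup>2 + (y' t)\<^sup>2))"
    for t
  have "(\<phi> has_real_derivative \<phi>' s) (at s within {a..})" if "a \<le> s" for s
    unfolding \<phi>_def \<phi>'_def
    by (rule derivative_eq_intros solves_linear_odeD[OF sol that] refl)+
      (simp add: algebra_simps power2_eq_square)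
  moreover have "\<phi>' s \<le> 0" if "a \<le> s" for s
  proof -
    have "2 * y s * y' s * (1 - f s) \<le> \<bar>2 * y s * y' s\<bar> * \<bar>1 - f s\<bar>"
      by (metis abs_ge_self abs_mult)
    also have "\<dots> \<le> ((y s)\<^sup>2 + (y' s)\<^sup>2) * L"
    proof (rule mult_mono)
      show "\<bar>2 * y s * y' s\<bar> \<le> (y s)\<^sup>2 + (y' s)\<^sup>2"
        using sum_squares_bound[of "\<bar>y s\<bar>" "\<bar>y' s\<bar>"] by (simp add: abs_mult)
      show "\<bar>1 - f s\<bar> \<le> L"
        using f_bound[OF that] unfolding L_def by linarith
    qed auto
    finally have "2 * y s * y' s * (1 - f s) - L * ((y s)\<^sup>2 + (y' s)\<^sup>2) \<le> 0"
      by (simp add: algebra_simps)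
    then show ?thesis
      unfolding \<phi>'_def by (simp add: mult_nonneg_nonpos)
  qed
  ultimately have "\<phi> t \<le> \<phi> a"
    using DERIV_nonpos_imp_decreasing_atLeast[of a \<phi> \<phi>' a t] \<open>a \<le> t\<close> by auto
  with \<open>y a = 0\<close> \<open>y' a = 0\<close> have "(y t)\<^sup>2 + (y' t)\<^sup>2 \<le> 0"
    by (simp add: \<phi>_def mult_le_0_iff)
  then show ?thesis
    by (simp add: sum_power2_le_zero_iff)
qed

definition wronskian ::
    "(real \<Rightarrow> real) \<Rightarrow> (real \<Rightarrow> real) \<Rightarrow> (real \<Rightarrow> real) \<Rightarrow> (real \<Rightarrow> real) \<Rightarrow> real \<Rightarrow> real" where
  "wronskian y1 y1' y2 y2' t = y1 t * y2' t - y1' t * y2 t"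

lemma wronskian_constant:
  assumes "solves_linear_ode a f y1 y1'" "solves_linear_ode a f y2 y2'" "a \<le> t"
  shows "wronskian y1 y1' y2 y2' t = wronskian y1 y1' y2 y2' a"
proof -
  have "(wronskian y1 y1' y2 y2' has_real_derivative 0) (at s within {a..})" if "a \<le> s" for s
    unfolding wronskian_def
    by (rule derivative_eq_intros solves_linear_odeD[OF assms(1) that]
          solves_linear_odeD[OF assms(2) that] refl)+ (simp add: algebra_simps)
  then obtain w where "\<forall>s\<in>{a..}. wronskian y1 y1' y2 y2' s = w"
    using has_field_derivative_zero_constant[of "{a..}"] by force
  with \<open>a \<le> t\<close> show ?thesis by simp
qed

lemma wronskian_nonzero:
  assumes sol1: "solves_linear_ode a f y1 y1'" and sol2: "solves_linear_ode a f y2 y2'"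
    and f_bound: "\<And>t. a \<le> t \<Longrightarrow> \<bar>f t\<bar> \<le> K"
    and lin_indep: "\<And>\<alpha> \<beta> :: real. (\<forall>t\<ge>a. \<alpha> * y1 t + \<beta> * y2 t = 0) \<Longrightarrow> \<alpha> = 0 \<and> \<beta> = 0"
  shows "wronskian y1 y1' y2 y2' a \<noteq> 0"
proof
  have initially_zero: "\<alpha> = 0 \<and> \<beta> = 0"
    if "\<alpha> * y1 a + \<beta> * y2 a = 0" "\<alpha> * y1' a + \<beta> * y2' a = 0" for \<alpha> \<beta>
    using solves_linear_ode_eq_0[OF solves_linear_ode_lincomb[OF sol1 sol2] f_bound] that
    by (intro lin_indep) blast
  assume "wronskian y1 y1' y2 y2' a = 0"
  then have "y2 a = 0 \<and> y1 a = 0" "y2' a = 0 \<and> y1' a = 0"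
    using initially_zero[of "y2 a" "- y1 a"] initially_zero[of "y2' a" "- y1' a"]
    by (auto simp: wronskian_def algebra_simps)
  then show False
    using initially_zero[of 1 0] by simp
qed

text \<open>With \<open>u = y s\<close>, \<open>v = y' s\<close> and \<open>g = f s\<close>, the left-hand side is the derivative of
  \<open>ode_energy c y y'\<close> at \<open>s\<close>, and the right-hand side is \<open>2c / s\<close> times the energy.\<close>
lemma energy_rate_le:
  fixes s c g u v :: real
  assumes "s > 0" "c \<ge> 0" "\<bar>g\<bar> \<le> c / s\<^sup>2"
  shows "2 * u * v * (c / s\<^sup>2 - g) - 2 * c * u\<^sup>2 / s ^ 3 \<le> 2 * c / s * (v\<^sup>2 + c * u\<^sup>2 / s\<^sup>2)"
proof -
  have amgm: "\<bar>2 * u * v\<bar> \<le> u\<^sup>2 / s + s * v\<^sup>2"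
  proof -
    have "u\<^sup>2 / s + s * v\<^sup>2 - \<bar>2 * u * v\<bar> = (\<bar>u\<bar> - s * \<bar>v\<bar>)\<^sup>2 / s"
      using \<open>s > 0\<close> by (simp add: field_simps power2_eq_square abs_mult)
    then show ?thesis
      using \<open>s > 0\<close> by (smt (verit) divide_nonneg_pos zero_le_power2)
  qed
  have "2 * u * v * (c / s\<^sup>2 - g) \<le> \<bar>2 * u * v\<bar> * \<bar>c / s\<^sup>2 - g\<bar>"
    by (metis abs_ge_self abs_mult)
  also have "\<dots> \<le> (u\<^sup>2 / s + s * v\<^sup>2) * (2 * c / s\<^sup>2)"
    using assms by (intro mult_mono amgm) auto
  also have "\<dots> = 2 * c * u\<^sup>2 / s ^ 3 + 2 * c / s * v\<^sup>2"
    using \<open>s > 0\<close> by (simp add: field_simps power2_eq_square power3_eq_cube)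
  also have "\<dots> \<le> 2 * c * u\<^sup>2 / s ^ 3 + 2 * c / s * (v\<^sup>2 + c * u\<^sup>2 / s\<^sup>2)"
    using assms by (simp add: algebra_simps)
  finally show ?thesis by simp
qed

definition ode_energy :: "real \<Rightarrow> (real \<Rightarrow> real) \<Rightarrow> (real \<Rightarrow> real) \<Rightarrow> real \<Rightarrow> real" where
  "ode_energy c y y' t = (y' t)\<^sup>2 + c * (y t)\<^sup>2 / t\<^sup>2"

lemma power2_le_ode_energy: "c \<ge> 0 \<Longrightarrow> (y' t)\<^sup>2 \<le> ode_energy c y y' t"
  by (simp add: ode_energy_def)

lemma solves_linear_ode_energy_bound:
  assumes sol: "solves_linear_ode a f y y'"
    and "a > 0" "c \<ge> 0"
    and f_bound: "\<And>t. a \<le> t \<Longrightarrow> \<bar>f t\<bar> \<le> c / t\<^sup>2"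
    and "a \<le> t"
  shows "ode_energy c y y' t \<le> ode_energy c y y' a * (t / a) powr (2 * c)"
proof -
  let ?E = "ode_energy c y y'"
  define \<psi> where "\<psi> t = ?E t * t powr (- 2 * c)" for t
  define \<psi>' where "\<psi>' t = (2 * y t * y' t * (c / t\<^sup>2 - f t) - 2 * c * (y t)\<^sup>2 / t ^ 3
      - 2 * c / t * ?E t) * t powr (- 2 * c)" for t
  have "(\<psi> has_real_derivative \<psi>' s) (at s within {a..})" if "a \<le> s" for s
  proof -
    from that \<open>a > 0\<close> have "s > 0" by simp
    have powr_deriv: "((\<lambda>t. t powr (- 2 * c)) has_real_derivative - 2 * c * s powr (- 2 * c - 1))
        (at s within {a..})"
      using has_real_derivative_powr[OF \<open>s > 0\<close>] by (rule has_field_derivative_at_within)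
    have E_deriv: "(?E has_real_derivative
        2 * y s * y' s * (c / s\<^sup>2 - f s) - 2 * c * (y s)\<^sup>2 / s ^ 3) (at s within {a..})"
      unfolding ode_energy_def using \<open>s > 0\<close>
      by (auto intro!: derivative_eq_intros solves_linear_odeD[OF sol that]
          simp: field_simps power2_eq_square power3_eq_cube)
    show ?thesis
      unfolding \<psi>_def
      by (rule DERIV_cong[OF DERIV_mult[OF E_deriv powr_deriv]])
        (use \<open>s > 0\<close> in \<open>simp add: \<psi>'_def powr_diff field_simps\<close>)
  qed
  moreover have "\<psi>' s \<le> 0" if "a \<le> s" for s
    using energy_rate_le[of s c "f s" "y s" "y' s"] f_bound[OF that] that \<open>a > 0\<close> \<open>c \<ge> 0\<close>
    unfolding \<psi>'_def ode_energy_def by (intro mult_nonpos_nonneg) (auto simp: field_simps)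
  ultimately have "\<psi> t \<le> \<psi> a"
    using DERIV_nonpos_imp_decreasing_atLeast[of a \<psi> \<psi>' a t] \<open>a \<le> t\<close> by auto
  moreover have "(t / a) powr (2 * c) = a powr (- 2 * c) / t powr (- 2 * c)"
    using \<open>a > 0\<close> \<open>a \<le> t\<close> by (simp add: powr_divide powr_minus field_simps)
  ultimately show ?thesis
    using \<open>a > 0\<close> \<open>a \<le> t\<close> by (simp add: \<psi>_def pos_le_divide_eq)
qed

lemma norm_divide_Complex_le_wronskian:
  fixes x1 x2 v1 v2 :: real
  assumes "x1 * v2 - v1 * x2 \<noteq> 0"
  shows "cmod (Complex v1 v2 / Complex x1 x2) \<le> (v1\<^sup>2 + v2\<^sup>2) / \<bar>x1 * v2 - v1 * x2\<bar>"
proof -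
  define w where "w = x1 * v2 - v1 * x2"
  define p where "p = cmod (Complex x1 x2)"
  define q where "q = cmod (Complex v1 v2)"
  have "p\<^sup>2 = x1\<^sup>2 + x2\<^sup>2" "q\<^sup>2 = v1\<^sup>2 + v2\<^sup>2"
    by (simp_all add: p_def q_def cmod_power2)
  then have "p\<^sup>2 * q\<^sup>2 = w\<^sup>2 + (x1 * v1 + x2 * v2)\<^sup>2"
    by (simp add: w_def power2_eq_square algebra_simps)
  then have "w\<^sup>2 \<le> (p * q)\<^sup>2"
    by (simp add: power_mult_distrib)
  then have w_le: "\<bar>w\<bar> \<le> p * q"
    using abs_le_square_iff[of w "p * q"] by (simp add: p_def q_def)
  with assms have "\<bar>w\<bar> > 0" "p > 0" "q > 0"
    by (auto simp: w_def p_def q_def)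
  then have "q / p = q\<^sup>2 / (p * q)"
    by (simp add: power2_eq_square)
  also have "\<dots> \<le> q\<^sup>2 / \<bar>w\<bar>"
    using w_le \<open>\<bar>w\<bar> > 0\<close> by (intro divide_left_mono) auto
  finally show ?thesis
    by (simp add: p_def q_def w_def norm_divide cmod_power2)
qed

lemma norm_log_derivative_le_energy:
  assumes sol1: "solves_linear_ode a f y1 y1'" and sol2: "solves_linear_ode a f y2 y2'"
    and "a > 0" "c \<ge> 0"
    and f_bound: "\<And>t. a \<le> t \<Longrightarrow> \<bar>f t\<bar> \<le> c / t\<^sup>2"
    and W_a: "wronskian y1 y1' y2 y2' a \<noteq> 0"
    and "a \<le> t"
  shows "cmod (Complex (y1' t) (y2' t) / Complex (y1 t) (y2 t))
    \<le> (ode_energy c y1 y1' a + ode_energy c y2 y2' a) / \<bar>wronskian y1 y1' y2 y2' a\<bar>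
      * (t / a) powr (2 * c)"
proof -
  let ?W = "\<bar>wronskian y1 y1' y2 y2' a\<bar>"
  have "cmod (Complex (y1' t) (y2' t) / Complex (y1 t) (y2 t)) \<le> ((y1' t)\<^sup>2 + (y2' t)\<^sup>2) / ?W"
    using norm_divide_Complex_le_wronskian[of "y1 t" "y2' t" "y1' t" "y2 t"] W_a
      wronskian_constant[OF sol1 sol2 \<open>a \<le> t\<close>] by (simp add: wronskian_def)
  also have "\<dots> \<le> (ode_energy c y1 y1' t + ode_energy c y2 y2' t) / ?W"
    using \<open>c \<ge> 0\<close> by (intro divide_right_mono add_mono power2_le_ode_energy) simp_all
  also have "\<dots> \<le> (ode_energy c y1 y1' a + ode_energy c y2 y2' a) * (t / a) powr (2 * c) / ?W"
    using solves_linear_ode_energy_bound[OF sol1 \<open>a > 0\<close> \<open>c \<ge> 0\<close> f_bound \<open>a \<le> t\<close>]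
      solves_linear_ode_energy_bound[OF sol2 \<open>a > 0\<close> \<open>c \<ge> 0\<close> f_bound \<open>a \<le> t\<close>]
    by (intro divide_right_mono) (auto simp: algebra_simps)
  finally show ?thesis
    by simp
qed

theorem mainTheorem18:
  fixes a c :: real and f y1 y2 y1' y2' :: "real \<Rightarrow> real"
  assumes a_ge: "a \<ge> 1"
    and c_pos: "c > 0"
    and f_cont: "continuous_on {a..} f"
    and f_bound: "\<And>t. t \<ge> a \<Longrightarrow> \<bar>f t\<bar> \<le> c / t\<^sup>2"
    and y1_d: "\<And>t. t \<ge> a \<Longrightarrow> (y1 has_real_derivative y1' t) (at t within {a..})"
    and y1_dd: "\<And>t. t \<ge> a \<Longrightarrow> (y1' has_real_derivative (- f t * y1 t)) (at t within {a..})"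
    and y2_d: "\<And>t. t \<ge> a \<Longrightarrow> (y2 has_real_derivative y2' t) (at t within {a..})"
    and y2_dd: "\<And>t. t \<ge> a \<Longrightarrow> (y2' has_real_derivative (- f t * y2 t)) (at t within {a..})"
    and lin_indep: "\<And>\<alpha> \<beta> :: real. (\<forall>t\<ge>a. \<alpha> * y1 t + \<beta> * y2 t = 0) \<Longrightarrow> \<alpha> = 0 \<and> \<beta> = 0"
  shows "\<exists>D>0. \<forall>t\<ge>a.
           cmod ((complex_of_real (y1' t) + \<i> * complex_of_real (y2' t))
                 / (complex_of_real (y1 t) + \<i> * complex_of_real (y2 t)))
           \<le> D * t powr (2 * c)"
proof -
  have sol1: "solves_linear_ode a f y1 y1'" and sol2: "solves_linear_ode a f y2 y2'"
    using y1_d y1_dd y2_d y2_dd by (simp_all add: solves_linear_ode_def)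
  have "\<bar>f t\<bar> \<le> c" if "a \<le> t" for t
    using f_bound[OF that] that a_ge c_pos order_trans[of _ "c / t\<^sup>2" c]
    by (simp add: divide_le_eq one_le_power)
  then have W_a: "wronskian y1 y1' y2 y2' a \<noteq> 0"
    using wronskian_nonzero[OF sol1 sol2 _ lin_indep] by blast
  define D where "D = (ode_energy c y1 y1' a + ode_energy c y2 y2' a) / \<bar>wronskian y1 y1' y2 y2' a\<bar>"
  have "(y1' a)\<^sup>2 + (y2' a)\<^sup>2 > 0"
    using W_a by (auto simp: wronskian_def sum_power2_gt_zero_iff)
  with power2_le_ode_energy[of c y1' a y1] power2_le_ode_energy[of c y2' a y2] c_pos W_a
  have "D > 0"
    unfolding D_def by (smt (verit) divide_pos_pos)
  moreover have "cmod (Complex (y1' t) (y2' t) / Complex (y1 t) (y2 t)) \<le> D * t powr (2 * c)"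
    if "a \<le> t" for t
  proof -
    have "(t / a) powr (2 * c) \<le> t powr (2 * c)"
      using a_ge \<open>a \<le> t\<close> c_pos by (intro powr_mono2) (auto simp: divide_le_eq)
    with \<open>D > 0\<close> norm_log_derivative_le_energy[OF sol1 sol2 _ _ f_bound W_a that] a_ge c_pos
    show ?thesis
      unfolding D_def by (smt (verit) mult_left_mono)
  qed
  ultimately show ?thesis
    unfolding Complex_eq[symmetric] by blast
qed

end
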